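(* Let $\mathcal{H}$ be a complex Hilbert space, let $A\in\mathcal{B}(\mathcal{H})$ be a nonzero positive operator, and let $\mathbb{A}=\begin{pmatrix}A&O\\O&A\end{pmatrix}$ on $\mathcal{H}\oplus\mathcal{H}$. Let $T\in\mathcal{B}_A(\mathcal{H})$ and put $\Re_A(T)=\frac{T+T^{\sharp_A}}{2}$, $\Im_A(T)=\frac{T-T^{\sharp_A}}{2i}$. Then $$\omega_A(T)\leq 2\min\left\{\omega_{\mathbb{A}}\left[\begin{pmatrix}\Re_A(T)&O\\\Im_A(T)&O\end{pmatrix}\right],\ \omega_{\mathbb{A}}\left[\begin{pmatrix}O&-i\Im_A(T)\\\Re_A(T)&O\end{pmatrix}\right]\right\}.$$
   Context: For a positive operator $A$ on $\mathcal{H}$, $\langle x,y\rangle_A:=\langle Ax,y\rangle$ and $\|x\|_A:=\sqrt{\langle x,x\rangle_A}$. $\mathcal{B}_A(\mathcal{H})$ is the set of $T\in\mathcal{B}(\mathcal{H})$ with $\mathcal{R}(T^*A)\subseteq\mathcal{R}(A)$; for such $T$, $T^{\sharp_A}$ is the unique solution $X$ of $AX=T^*A$ with $\mathcal{R}(X)\subseteq\overline{\mathcal{R}(A)}$. $\omega_A(T):=\sup\{|\langle Tx,x\rangle_A|:x\in\mathcal{H},\|x\|_A=1\}$. $\omega_{\mathbb{A}}$ is defined analogously on $\mathcal{H}\oplus\mathcal{H}$ with $\langle (x_1,x_2),(y_1,y_2)\rangle_{\mathbb{A}}=\langle x_1,y_1\rangle_A+\langle x_2,y_2\rangle_A$.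 *)

theory Defs
  imports "HOL-Analysis.Analysis"
begin

class complex_vector = real_vector +
  fixes scaleC :: "complex \<Rightarrow> 'a \<Rightarrow> 'a" (infixr \<open>*\<^sub>C\<close> 75)
  assumes scaleC_add_right: "a *\<^sub>C (x + y) = a *\<^sub>C x + a *\<^sub>C y"
    and scaleC_add_left: "(a + b) *\<^sub>C x = a *\<^sub>C x + b *\<^sub>C x"
    and scaleC_scaleC: "a *\<^sub>C (b *\<^sub>C x) = (a * b) *\<^sub>C x"
    and scaleC_one: "1 *\<^sub>C x = x"
    and scaleR_scaleC: "scaleR r x = complex_of_real r *\<^sub>C x"

class complex_inner = complex_vector + real_normed_vector +
  fixes cinner :: "'a \<Rightarrow> 'a \<Rightarrow> complex"
  assumes cinner_add_left: "cinner (x + y) z = cinner x z + cinner y z"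
    and cinner_scaleC_left: "cinner (c *\<^sub>C x) y = c * cinner x y"
    and cinner_commute: "cinner x y = cnj (cinner y x)"
    and cinner_ge_zero: "0 \<le> Re (cinner x x)"
    and cinner_eq_zero_iff: "cinner x x = 0 \<longleftrightarrow> x = 0"
    and norm_eq_sqrt_cinner: "norm x = sqrt (Re (cinner x x))"

class chilbert_space = complex_inner + complete_space

definition clinear :: "('a::complex_vector \<Rightarrow> 'b::complex_vector) \<Rightarrow> bool" where
  "clinear T \<longleftrightarrow> (\<forall>x y. T (x + y) = T x + T y) \<and> (\<forall>c x. T (c *\<^sub>C x) = c *\<^sub>C T x)"

definition bounded_clinear :: "('a::complex_inner \<Rightarrow> 'b::complex_inner) \<Rightarrow> bool" where
  "bounded_clinear T \<longleftrightarrow> clinear T \<and> (\<exists>K. \<forall>x. norm (T x) \<le> norm x * K)"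

text \<open>Hilbert-space adjoint \<open>T\<^sup>*\<close> (exists uniquely for bounded \<open>T\<close> by Riesz).\<close>
definition cadjoint :: "('a::chilbert_space \<Rightarrow> 'a) \<Rightarrow> 'a \<Rightarrow> 'a" where
  "cadjoint T = (SOME S. \<forall>x y. cinner (T x) y = cinner x (S y))"

definition positive_op :: "('a::chilbert_space \<Rightarrow> 'a) \<Rightarrow> bool" where
  "positive_op A \<longleftrightarrow> bounded_clinear A \<and>
     (\<forall>x. Im (cinner (A x) x) = 0 \<and> 0 \<le> Re (cinner (A x) x))"

definition BA :: "('a::chilbert_space \<Rightarrow> 'a) \<Rightarrow> ('a \<Rightarrow> 'a) set" where
  "BA A = {T. bounded_clinear T \<and> range (cadjoint T \<circ> A) \<subseteq> range A}"

definition Asharp :: "('a::chilbert_space \<Rightarrow> 'a) \<Rightarrow> ('a \<Rightarrow> 'a) \<Rightarrow> 'a \<Rightarrow> 'a" where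
  "Asharp A T = (THE X. bounded_clinear X \<and> (\<forall>x. A (X x) = cadjoint T (A x))
                        \<and> range X \<subseteq> closure (range A))"

definition ReA :: "('a::chilbert_space \<Rightarrow> 'a) \<Rightarrow> ('a \<Rightarrow> 'a) \<Rightarrow> 'a \<Rightarrow> 'a" where
  "ReA A T = (\<lambda>x. (1/2) *\<^sub>C (T x + Asharp A T x))"

definition ImA :: "('a::chilbert_space \<Rightarrow> 'a) \<Rightarrow> ('a \<Rightarrow> 'a) \<Rightarrow> 'a \<Rightarrow> 'a" where
  "ImA A T = (\<lambda>x. (1 / (2 * \<i>)) *\<^sub>C (T x - Asharp A T x))"

definition A_inner :: "('a::chilbert_space \<Rightarrow> 'a) \<Rightarrow> 'a \<Rightarrow> 'a \<Rightarrow> complex" where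
  "A_inner A x y = cinner (A x) y"

definition A_norm :: "('a::chilbert_space \<Rightarrow> 'a) \<Rightarrow> 'a \<Rightarrow> real" where
  "A_norm A x = sqrt (Re (A_inner A x x))"

definition omegaA :: "('a::chilbert_space \<Rightarrow> 'a) \<Rightarrow> ('a \<Rightarrow> 'a) \<Rightarrow> real" where
  "omegaA A T = Sup {cmod (A_inner A (T x) x) | x. A_norm A x = 1}"

text \<open>On \<open>H \<oplus> H\<close> (modelled as \<open>'a \<times> 'a\<close>) with \<open>\<bbbA> = diag(A, A)\<close>.\<close>
definition AA_inner :: "('a::chilbert_space \<Rightarrow> 'a) \<Rightarrow> 'a \<times> 'a \<Rightarrow> 'a \<times> 'a \<Rightarrow> complex" where
  "AA_inner A x y = A_inner A (fst x) (fst y) + A_inner A (snd x) (snd y)"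

definition AA_norm :: "('a::chilbert_space \<Rightarrow> 'a) \<Rightarrow> 'a \<times> 'a \<Rightarrow> real" where
  "AA_norm A x = sqrt (Re (AA_inner A x x))"

definition omegaAA :: "('a::chilbert_space \<Rightarrow> 'a) \<Rightarrow> ('a \<times> 'a \<Rightarrow> 'a \<times> 'a) \<Rightarrow> real" where
  "omegaAA A M = Sup {cmod (AA_inner A (M x) x) | x. AA_norm A x = 1}"

definition opmat :: "('a::complex_vector \<Rightarrow> 'a) \<Rightarrow> ('a \<Rightarrow> 'a) \<Rightarrow> ('a \<Rightarrow> 'a) \<Rightarrow> ('a \<Rightarrow> 'a)
                     \<Rightarrow> 'a \<times> 'a \<Rightarrow> 'a \<times> 'a" where
  "opmat T11 T12 T21 T22 = (\<lambda>(x1, x2). (T11 x1 + T12 x2, T21 x1 + T22 x2))"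

end

theory Submission
  imports Defs
begin

(*
  For x with \<parallel>x\<parallel>\<^sub>A = 1 put z = \<langle>T x, x\<rangle>\<^sub>A. Then \<langle>Re\<^sub>A(T) x, x\<rangle>\<^sub>A = Re z and
  \<langle>Im\<^sub>A(T) x, x\<rangle>\<^sub>A = Im z, so the \<bbbA>-unit vectors (x, -\<i> x)/\<surd>2 and (x, x)/\<surd>2 of H \<oplus> H give
  the values z/2 and cnj z/2 in the \<bbbA>-numerical ranges of the two operator matrices; hence |z| is
  at most twice either \<bbbA>-numerical radius.

  The work lies in making both sides meaningful. T\<^sup>\<sharp>\<^sup>A exists by Douglas' theorem, proved via the
  orthogonal projection onto the closure of R(A) and the closed graph theorem. The numerical ranges
  are bounded because T is A-bounded: P = T\<^sup>\<sharp>\<^sup>A T is A-selfadjoint with \<parallel>T x\<parallel>\<^sub>A^2 = \<langle>P x, x\<rangle>\<^sub>A,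
  and an A-selfadjoint bounded operator is A-bounded by a power trick.
*)

lemma scaleC_zero_left [simp]: "0 *\<^sub>C (x::'a::complex_vector) = 0"
  using scaleR_scaleC[of 0 x] by simp

lemma scaleC_zero_right [simp]: "c *\<^sub>C (0::'a::complex_vector) = 0"
  using scaleC_add_right[of c 0 0] by simp

lemma scaleC_minus_left: "(- c) *\<^sub>C (x::'a::complex_vector) = - (c *\<^sub>C x)"
  using scaleC_add_left[of c "-c" x] by (simp add: add_eq_0_iff)

lemma scaleC_minus1_left: "(-1) *\<^sub>C (x::'a::complex_vector) = - x"
  by (simp add: scaleC_minus_left scaleC_one)

lemma scaleC_minus_right: "c *\<^sub>C (- x::'a::complex_vector) = - (c *\<^sub>C x)"
  using scaleC_add_right[of c x "-x"] by (simp add: add_eq_0_iff)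

lemma scaleC_diff_right: "c *\<^sub>C (x - y::'a::complex_vector) = c *\<^sub>C x - c *\<^sub>C y"
  by (simp only: diff_conv_add_uminus scaleC_add_right scaleC_minus_right)

lemma cinner_zero_left [simp]: "cinner 0 (y::'a::complex_inner) = 0"
  using cinner_add_left[of 0 0 y] by simp

lemma cinner_zero_right [simp]: "cinner (x::'a::complex_inner) 0 = 0"
  using cinner_commute[of x 0] by simp

lemma cinner_add_right: "cinner (x::'a::complex_inner) (y + z) = cinner x y + cinner x z"
  using cinner_commute[of x "y+z"] cinner_commute[of y x] cinner_commute[of z x]
  by (simp add: cinner_add_left)

lemma cinner_scaleC_right: "cinner (x::'a::complex_inner) (c *\<^sub>C y) = cnj c * cinner x y"
  using cinner_commute[of x "c *\<^sub>C y"] cinner_commute[of y x]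
  by (simp add: cinner_scaleC_left)

lemma cinner_minus_right: "cinner (x::'a::complex_inner) (- y) = - cinner x y"
  using cinner_add_right[of x y "-y"] by (simp add: add_eq_0_iff)

lemma cinner_diff_right: "cinner (x::'a::complex_inner) (y - z) = cinner x y - cinner x z"
  by (simp only: cinner_add_right cinner_minus_right diff_conv_add_uminus)

lemma cinner_self: "cinner (x::'a::complex_inner) x = complex_of_real ((norm x)\<^sup>2)"
proof -
  have "Im (cinner x x) = 0"
    using cinner_commute[of x x] by (simp add: complex_eq_iff)
  then show ?thesis
    by (simp add: complex_eq_iff norm_eq_sqrt_cinner cinner_ge_zero)
qed

lemma power2_norm_eq_cinner: "(norm (x::'a::complex_inner))\<^sup>2 = Re (cinner x x)"
  by (simp add: cinner_self)

lemma cinner_right_ext: "(\<And>x. cinner x a = cinner x (b::'a::complex_inner)) \<Longrightarrow> a = b"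
  using cinner_diff_right[of "a - b" a b] cinner_eq_zero_iff[of "a - b"] by simp

lemma power2_norm_add_scaleC:
  "(norm (x + c *\<^sub>C y))\<^sup>2 = (norm x)\<^sup>2 + 2 * Re (cnj c * cinner x y) + (cmod c)\<^sup>2 * (norm (y::'a::complex_inner))\<^sup>2"
proof -
  have "cinner (x + c *\<^sub>C y) (x + c *\<^sub>C y)
      = cinner x x + cnj c * cinner x y + c * cinner y x + (c * cnj c) * cinner y y"
    by (simp add: cinner_add_left cinner_add_right cinner_scaleC_left cinner_scaleC_right algebra_simps)
  moreover have "Re (c * cinner y x) = Re (cnj c * cinner x y)"
    using cinner_commute[of y x] by (metis complex_cnj_cnj complex_cnj_mult cnj.sel(1))
  moreover have "Re ((c * cnj c) * cinner y y) = (cmod c)\<^sup>2 * (norm y)\<^sup>2"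
    by (simp add: complex_norm_square[symmetric] cinner_self)
  ultimately show ?thesis by (simp add: power2_norm_eq_cinner)
qed

lemma norm_scaleC: "norm (c *\<^sub>C (x::'a::complex_inner)) = cmod c * norm x"
  using power2_norm_add_scaleC[of 0 c x] by (simp add: power_mult_distrib[symmetric])

lemma parallelogram_law:
  "(norm (a + b))\<^sup>2 + (norm (a - b))\<^sup>2 = 2 * (norm a)\<^sup>2 + 2 * (norm (b::'a::complex_inner))\<^sup>2"
  using power2_norm_add_scaleC[of a 1 b] power2_norm_add_scaleC[of a "-1" b]
  by (simp add: scaleC_one scaleC_minus1_left)

lemma le_mult_if_quadratic_nonneg:
  fixes p s q :: real
  assumes "q \<ge> 0" and quadratic: "\<And>t. 0 \<le> p - 2 * t * s + t\<^sup>2 * s * q"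
  shows "s \<le> p * q"
proof (cases "q = 0")
  case True
  have "s \<le> 0"
  proof (rule ccontr)
    assume "\<not> s \<le> 0"
    have "0 \<le> p - 2 * ((\<bar>p\<bar> + 1) / s) * s" using quadratic[of "(\<bar>p\<bar> + 1) / s"] True by simp
    also have "\<dots> = p - 2 * (\<bar>p\<bar> + 1)" using \<open>\<not> s \<le> 0\<close> by simp
    finally show False by (simp add: abs_if split: if_splits)
  qed
  then show ?thesis using True by simp
next
  case False
  then have "q > 0" using assms by simp
  have "0 \<le> p - 2 * (1/q) * s + (1/q)\<^sup>2 * s * q" by (rule quadratic)
  also have "\<dots> = p - s / q" using \<open>q > 0\<close> by (simp add: power2_eq_square field_simps)
  finally show ?thesis using \<open>q > 0\<close> by (simp add: field_simps mult.commute)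
qed

lemma sesquilinear_form_Cauchy_Schwarz:
  fixes B :: "'a::complex_vector \<Rightarrow> 'a \<Rightarrow> complex"
  assumes add: "\<And>x y z. B (x + y) z = B x z + B y z"
    and scale: "\<And>c x y. B (c *\<^sub>C x) y = c * B x y"
    and hermitian: "\<And>x y. B x y = cnj (B y x)"
    and nonneg: "\<And>x. 0 \<le> Re (B x x)"
  shows "(cmod (B x y))\<^sup>2 \<le> Re (B x x) * Re (B y y)"
proof -
  have add_right: "B x (y + z) = B x y + B x z" for x y z
    using hermitian[of x "y + z"] add[of y z x] hermitian[of y x] hermitian[of z x] by simp
  have scale_right: "B x (c *\<^sub>C y) = cnj c * B x y" for c x y
    using hermitian[of x "c *\<^sub>C y"] scale[of c y x] hermitian[of y x] by simp
  define a where "a = B x y"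
  have "0 \<le> Re (B x x) - 2 * t * (cmod a)\<^sup>2 + t\<^sup>2 * (cmod a)\<^sup>2 * Re (B y y)" for t :: real
  proof -
    define c where "c = - complex_of_real t * a"
    have "B (x + c *\<^sub>C y) (x + c *\<^sub>C y) = B x x + cnj c * a + c * (cnj a + cnj c * B y y)"
      using hermitian[of y x]
      by (simp add: add add_right scale scale_right a_def ring_distribs)
    also have "\<dots> = B x x - 2 * complex_of_real t * (a * cnj a)
          + complex_of_real (t\<^sup>2) * (a * cnj a) * B y y"
      unfolding c_def by (simp add: power2_eq_square ring_distribs mult.commute mult.left_commute)
    finally have "Re (B (x + c *\<^sub>C y) (x + c *\<^sub>C y)) =
        Re (B x x) - 2 * t * (cmod a)\<^sup>2 + t\<^sup>2 * (cmod a)\<^sup>2 * Re (B y y)"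
      by (simp add: complex_mult_cnj cmod_power2)
    then show ?thesis using nonneg by metis
  qed
  then show ?thesis
    unfolding a_def by (intro le_mult_if_quadratic_nonneg) (simp_all add: nonneg)
qed

lemma cinner_Cauchy_Schwarz: "cmod (cinner x (y::'a::complex_inner)) \<le> norm x * norm y"
proof -
  have "(cmod (cinner x y))\<^sup>2 \<le> (norm x * norm y)\<^sup>2"
    using sesquilinear_form_Cauchy_Schwarz[OF cinner_add_left cinner_scaleC_left
        cinner_commute cinner_ge_zero, of x y]
    by (simp add: power2_norm_eq_cinner power_mult_distrib)
  then show ?thesis by (simp add: power2_le_iff_abs_le)
qed

lemma bounded_linear_cinner_left: "bounded_linear (\<lambda>v::'a::complex_inner. cinner v u)"
  by (rule bounded_linear_intro[where K="norm u"])
     (auto simp: cinner_add_left scaleR_scaleC cinner_scaleC_left scaleR_conv_of_real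
       cinner_Cauchy_Schwarz)

subclass (in chilbert_space) banach ..

lemma clinear_add: "clinear T \<Longrightarrow> T (x + y) = T x + T y"
  by (simp add: clinear_def)

lemma clinear_scaleC: "clinear T \<Longrightarrow> T (c *\<^sub>C x) = c *\<^sub>C T x"
  by (simp add: clinear_def)

lemma clinear_zero: "clinear T \<Longrightarrow> T 0 = 0"
  using clinear_add[of T 0 0] by simp

lemma clinear_minus: "clinear T \<Longrightarrow> T (- x) = - T x"
  by (metis clinear_scaleC scaleC_minus1_left)

lemma clinear_diff: "clinear T \<Longrightarrow> T (x - y) = T x - T y"
  by (simp only: diff_conv_add_uminus clinear_add clinear_minus)

lemma clinear_scaleR: "clinear T \<Longrightarrow> T (r *\<^sub>R x) = r *\<^sub>R T x"
  by (simp add: scaleR_scaleC clinear_scaleC)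

lemma bounded_clinear_clinear: "bounded_clinear T \<Longrightarrow> clinear T"
  by (simp add: bounded_clinear_def)

lemma bounded_clinear_pos_bound:
  assumes "bounded_clinear T"
  obtains K where "K > 0" "\<And>x. norm (T x) \<le> norm x * K"
proof -
  obtain K where K: "\<And>x. norm (T x) \<le> norm x * K"
    using assms unfolding bounded_clinear_def by blast
  have "norm (T x) \<le> norm x * (max K 0 + 1)" for x
    using K[of x] by (smt (verit) mult_left_mono norm_ge_zero)
  then show ?thesis using that[of "max K 0 + 1"] by simp
qed

lemma bounded_clinear_imp_bounded_linear: "bounded_clinear T \<Longrightarrow> bounded_linear T"
proof -
  assume T: "bounded_clinear T"
  then obtain K where K: "\<And>x. norm (T x) \<le> norm x * K" by (metis bounded_clinear_pos_bound)
  show ?thesis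
    by (rule bounded_linear_intro[OF _ _ K])
       (use T in \<open>auto simp: bounded_clinear_clinear clinear_add clinear_scaleR\<close>)
qed

lemma bounded_clinear_compose:
  assumes "bounded_clinear S" and "bounded_clinear T"
  shows "bounded_clinear (\<lambda>x. S (T x))"
proof -
  obtain K where K: "\<And>x. norm (S x) \<le> norm x * K" "K > 0"
    using assms(1) bounded_clinear_pos_bound by blast
  obtain L where L: "\<And>x. norm (T x) \<le> norm x * L"
    using assms(2) bounded_clinear_pos_bound by blast
  have "norm (S (T x)) \<le> norm x * (L * K)" for x
    using order_trans[OF K(1) mult_right_mono[OF L \<open>K > 0\<close>[THEN less_imp_le]]]
    by (simp add: mult.assoc)
  moreover have "clinear (\<lambda>x. S (T x))"
    using assms by (simp add: bounded_clinear_def clinear_def)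
  ultimately show ?thesis unfolding bounded_clinear_def by blast
qed

lemma norm_funpow_le:
  fixes f :: "'a::real_normed_vector \<Rightarrow> 'a"
  assumes "K \<ge> 0" and "\<And>x. norm (f x) \<le> norm x * K"
  shows "norm ((f ^^ n) x) \<le> K ^ n * norm x"
proof (induction n)
  case (Suc n)
  have "norm ((f ^^ Suc n) x) \<le> norm ((f ^^ n) x) * K" by (simp add: assms(2))
  also have "\<dots> \<le> K ^ n * norm x * K" using Suc.IH assms(1) by (rule mult_right_mono)
  finally show ?case by (simp add: algebra_simps)
qed simp

section \<open>Projection theorem, Riesz representation and adjoints\<close>

definition csubspace :: "'a::complex_vector set \<Rightarrow> bool" where
  "csubspace M \<longleftrightarrow> 0 \<in> M \<and> (\<forall>x\<in>M. \<forall>y\<in>M. x + y \<in> M) \<and> (\<forall>c. \<forall>x\<in>M. c *\<^sub>C x \<in> M)"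

lemma csubspace_closure:
  fixes M :: "'a::complex_inner set"
  assumes "csubspace M"
  shows "csubspace (closure M)"
proof -
  have add: "x + y \<in> M" and scale: "c *\<^sub>C x \<in> M" if "x \<in> M" "y \<in> M" for x y c
    using assms that by (auto simp: csubspace_def)
  have "c *\<^sub>C x \<in> closure M" if x: "x \<in> closure M" for x c
  proof -
    have "bounded_linear (\<lambda>v::'a. c *\<^sub>C v)"
      by (rule bounded_linear_intro[where K="cmod c"])
         (auto simp: scaleC_add_right scaleR_scaleC scaleC_scaleC mult.commute norm_scaleC)
    moreover obtain xs where "\<forall>n. xs n \<in> M" "xs \<longlonglongrightarrow> x"
      using x unfolding closure_sequential by blast
    ultimately show ?thesis unfolding closure_sequential
      by (intro exI[of _ "\<lambda>n. c *\<^sub>C xs n"]) (auto intro: scale bounded_linear.tendsto)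
  qed
  moreover have "x + y \<in> closure M" if xy: "x \<in> closure M" "y \<in> closure M" for x y
  proof -
    obtain xs ys where "\<forall>n. xs n \<in> M" "xs \<longlonglongrightarrow> x" "\<forall>n. ys n \<in> M" "ys \<longlonglongrightarrow> y"
      using xy unfolding closure_sequential by blast
    then show ?thesis unfolding closure_sequential
      by (intro exI[of _ "\<lambda>n. xs n + ys n"]) (auto intro: add tendsto_add)
  qed
  moreover have "0 \<in> closure M" using assms closure_subset by (auto simp: csubspace_def)
  ultimately show ?thesis by (auto simp: csubspace_def)
qed

lemma near_minimizers_close:
  fixes w m m' :: "'a::complex_inner"
  assumes "\<delta> \<le> (norm (w - (1/2) *\<^sub>R (m + m')))\<^sup>2"
    and "(norm (w - m))\<^sup>2 \<le> \<delta> + \<epsilon>" and "(norm (w - m'))\<^sup>2 \<le> \<delta> + \<epsilon>"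
  shows "(norm (m - m'))\<^sup>2 \<le> 4 * \<epsilon>"
proof -
  have "(w - m) + (w - m') = 2 *\<^sub>R (w - (1/2) *\<^sub>R (m + m'))"
    by (simp add: scaleR_diff_right scaleR_add_right scaleR_2)
  then have "(norm ((w - m) + (w - m')))\<^sup>2 = 4 * (norm (w - (1/2) *\<^sub>R (m + m')))\<^sup>2"
    by (simp add: power_mult_distrib)
  moreover have "norm ((w - m) - (w - m')) = norm (m - m')"
    by (simp add: norm_minus_commute)
  ultimately show ?thesis using parallelogram_law[of "w - m" "w - m'"] assms by simp
qed

lemma Cauchy_if_near_minimizers:
  fixes ms :: "nat \<Rightarrow> 'a::complex_inner"
  assumes mid: "\<And>k l. \<delta> \<le> (norm (w - (1/2) *\<^sub>R (ms k + ms l)))\<^sup>2"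
    and near: "\<And>n. (norm (w - ms n))\<^sup>2 \<le> \<delta> + inverse (real (Suc n))"
  shows "Cauchy ms"
proof (rule CauchyI)
  fix \<epsilon> :: real
  assume "0 < \<epsilon>"
  then obtain N :: nat where N: "N > 0" "inverse (real N) < \<epsilon>\<^sup>2 / 4"
    using ex_inverse_of_nat_less[of "\<epsilon>\<^sup>2 / 4"] by auto
  have "norm (ms k - ms l) < \<epsilon>" if "k \<ge> N" "l \<ge> N" for k l
  proof -
    have "inverse (real (Suc k)) \<le> inverse (real N)" "inverse (real (Suc l)) \<le> inverse (real N)"
      using that N(1) by (auto intro!: le_imp_inverse_le)
    then have "(norm (w - ms k))\<^sup>2 \<le> \<delta> + inverse (real N)"
      "(norm (w - ms l))\<^sup>2 \<le> \<delta> + inverse (real N)"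
      using near[of k] near[of l] by linarith+
    then have "(norm (ms k - ms l))\<^sup>2 \<le> 4 * inverse (real N)"
      by (rule near_minimizers_close[OF mid])
    then have "(norm (ms k - ms l))\<^sup>2 < \<epsilon>\<^sup>2" using N(2) by linarith
    then show ?thesis using \<open>0 < \<epsilon>\<close> by (simp add: power2_less_imp_less)
  qed
  then show "\<exists>M. \<forall>m\<ge>M. \<forall>n\<ge>M. norm (ms m - ms n) < \<epsilon>" by blast
qed

lemma closed_csubspace_best_approximation:
  fixes M :: "'a::chilbert_space set"
  assumes "closed M" and "csubspace M"
  shows "\<exists>m\<in>M. \<forall>v\<in>M. norm (w - m) \<le> norm (w - v)"
proof -
  define \<delta> where "\<delta> = Inf ((\<lambda>m. (norm (w - m))\<^sup>2) ` M)"
  have "0 \<in> M" using assms(2) by (simp add: csubspace_def)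
  have \<delta>_le: "\<delta> \<le> (norm (w - m))\<^sup>2" if "m \<in> M" for m
    unfolding \<delta>_def by (rule cInf_lower) (use that in \<open>auto intro: bdd_belowI[of _ 0]\<close>)
  have "\<exists>m\<in>M. (norm (w - m))\<^sup>2 < \<delta> + inverse (real (Suc n))" for n
    using cInf_lessD[of "(\<lambda>m. (norm (w - m))\<^sup>2) ` M" "\<delta> + inverse (real (Suc n))"] \<open>0 \<in> M\<close>
    by (auto simp: \<delta>_def)
  then obtain ms where ms: "\<And>n. ms n \<in> M" "\<And>n. (norm (w - ms n))\<^sup>2 < \<delta> + inverse (real (Suc n))"
    by metis
  have "Cauchy ms"
  proof (rule Cauchy_if_near_minimizers)
    have "complex_of_real (1/2) *\<^sub>C (ms k + ms l) \<in> M" for k l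
      using assms(2) ms(1) by (simp add: csubspace_def)
    then show "\<delta> \<le> (norm (w - (1/2) *\<^sub>R (ms k + ms l)))\<^sup>2" for k l
      by (simp add: \<delta>_le scaleR_scaleC)
    show "(norm (w - ms n))\<^sup>2 \<le> \<delta> + inverse (real (Suc n))" for n
      using ms(2) less_imp_le by blast
  qed
  then obtain m where lim: "ms \<longlonglongrightarrow> m"
    using Cauchy_convergent convergent_def by blast
  have "m \<in> M" by (rule closed_sequentially[OF assms(1) ms(1) lim])
  moreover have "(norm (w - m))\<^sup>2 \<le> \<delta>"
  proof (rule LIMSEQ_le)
    show "(\<lambda>n. (norm (w - ms n))\<^sup>2) \<longlonglongrightarrow> (norm (w - m))\<^sup>2"
      by (intro tendsto_intros lim)
    show "(\<lambda>n. \<delta> + inverse (real (Suc n))) \<longlonglongrightarrow> \<delta>"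
      using tendsto_add[OF tendsto_const LIMSEQ_inverse_real_of_nat, of \<delta>] by simp
    show "\<exists>N. \<forall>n\<ge>N. (norm (w - ms n))\<^sup>2 \<le> \<delta> + inverse (real (Suc n))"
      using ms(2) less_imp_le by blast
  qed
  ultimately show ?thesis
    using \<delta>_le by (meson norm_ge_zero order_trans power2_le_imp_le)
qed

lemma best_approximation_orthogonal:
  fixes M :: "'a::complex_inner set"
  assumes "csubspace M" and "m \<in> M" and best: "\<And>v. v \<in> M \<Longrightarrow> norm (w - m) \<le> norm (w - v)"
    and "v \<in> M"
  shows "cinner (w - m) v = 0"
proof -
  define a where "a = cinner (w - m) v"
  have "0 \<le> 0 - 2 * t * (cmod a)\<^sup>2 + t\<^sup>2 * (cmod a)\<^sup>2 * (norm v)\<^sup>2" for t :: real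
  proof -
    define c where "c = - (complex_of_real t * a)"
    have "m + (- c) *\<^sub>C v \<in> M"
      using assms(1,2,4) by (simp add: csubspace_def)
    then have "norm (w - m) \<le> norm ((w - m) + c *\<^sub>C v)"
      using best[of "m + (- c) *\<^sub>C v"] by (simp add: scaleC_minus_left algebra_simps)
    then have "(norm (w - m))\<^sup>2 \<le> (norm ((w - m) + c *\<^sub>C v))\<^sup>2"
      by (simp add: power_mono)
    also have "\<dots> = (norm (w - m))\<^sup>2 + 2 * Re (cnj c * a) + (cmod c)\<^sup>2 * (norm v)\<^sup>2"
      unfolding a_def by (rule power2_norm_add_scaleC)
    also have "Re (cnj c * a) = - t * (cmod a)\<^sup>2"
      unfolding cmod_power2 by (simp add: c_def algebra_simps power2_eq_square)
    also have "(cmod c)\<^sup>2 = t\<^sup>2 * (cmod a)\<^sup>2"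
      by (simp add: c_def norm_mult power_mult_distrib)
    finally show ?thesis by simp
  qed
  then have "(cmod a)\<^sup>2 \<le> 0 * (norm v)\<^sup>2"
    by (intro le_mult_if_quadratic_nonneg) auto
  then show ?thesis by (simp add: a_def)
qed

lemma orthogonal_projection_exists:
  fixes M :: "'a::chilbert_space set"
  assumes "closed M" and "csubspace M"
  shows "\<exists>m\<in>M. \<forall>v\<in>M. cinner (w - m) v = 0"
  using closed_csubspace_best_approximation[OF assms, of w]
    best_approximation_orthogonal[OF assms(2)] by blast

lemma Riesz_representation:
  fixes f :: "'a::chilbert_space \<Rightarrow> complex"
  assumes add: "\<And>x y. f (x + y) = f x + f y" and scale: "\<And>c x. f (c *\<^sub>C x) = c * f x"
    and bounded: "\<And>x. cmod (f x) \<le> norm x * K"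
  shows "\<exists>z. \<forall>x. f x = cinner x z"
proof (cases "\<forall>x. f x = 0")
  case True
  then show ?thesis by (intro exI[of _ 0]) simp
next
  case False
  then obtain u where u: "f u \<noteq> 0" by blast
  have diff: "f (x - y) = f x - f y" for x y
    using add[of x "-y"] scale[of "-1" y] by (simp add: scaleC_minus1_left)
  have "bounded_linear f"
    by (rule bounded_linear_intro[OF add _ bounded])
       (simp add: scaleR_scaleC scale scaleR_conv_of_real)
  then have "closed {x. f x = 0}"
    by (intro closed_Collect_eq) (auto intro: linear_continuous_on)
  moreover have "csubspace {x. f x = 0}"
    using add scale[of 0 0] scale by (simp add: csubspace_def)
  ultimately obtain m where "f m = 0" and orth: "\<And>v. f v = 0 \<Longrightarrow> cinner (u - m) v = 0"
    using orthogonal_projection_exists[of "{x. f x = 0}" u] by blast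
  define n where "n = u - m"
  have fn: "f n = f u" using \<open>f m = 0\<close> by (simp add: n_def diff)
  then have "n \<noteq> 0" using u scale[of 0 0] by auto
  have "f x = cinner x ((cnj (f n) / complex_of_real ((norm n)\<^sup>2)) *\<^sub>C n)" for x
  proof -
    have "f (x - (f x / f n) *\<^sub>C n) = 0" using u fn by (simp add: diff scale)
    then have "cinner n (x - (f x / f n) *\<^sub>C n) = 0" using orth by (simp add: n_def)
    then have "cinner n x = cnj (f x / f n) * complex_of_real ((norm n)\<^sup>2)"
      by (simp add: cinner_diff_right cinner_scaleC_right cinner_self)
    then have "cinner x n = (f x / f n) * complex_of_real ((norm n)\<^sup>2)"
      using cinner_commute[of x n] by simp
    then show ?thesis using u fn \<open>n \<noteq> 0\<close> by (simp add: cinner_scaleC_right field_simps)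
  qed
  then show ?thesis by blast
qed

lemma cadjoint_exists:
  fixes T :: "'a::chilbert_space \<Rightarrow> 'a"
  assumes "bounded_clinear T"
  shows "\<exists>S. \<forall>x y. cinner (T x) y = cinner x (S y)"
proof -
  obtain K where K: "K > 0" "\<And>x. norm (T x) \<le> norm x * K"
    using assms bounded_clinear_pos_bound by blast
  have lin: "clinear T" using assms by (rule bounded_clinear_clinear)
  have "\<exists>z. \<forall>x. cinner (T x) y = cinner x z" for y
  proof (rule Riesz_representation[where K="K * norm y"])
    show "cinner (T (x1 + x2)) y = cinner (T x1) y + cinner (T x2) y" for x1 x2
      by (simp add: clinear_add[OF lin] cinner_add_left)
    show "cinner (T (c *\<^sub>C x)) y = c * cinner (T x) y" for c x
      by (simp add: clinear_scaleC[OF lin] cinner_scaleC_left)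
    show "cmod (cinner (T x) y) \<le> norm x * (K * norm y)" for x
      using order_trans[OF cinner_Cauchy_Schwarz mult_right_mono[OF K(2)]]
      by (simp add: mult.assoc)
  qed
  then show ?thesis by metis
qed

lemma cinner_cadjoint:
  fixes T :: "'a::chilbert_space \<Rightarrow> 'a"
  assumes "bounded_clinear T"
  shows "cinner (T x) y = cinner x (cadjoint T y)"
  using someI_ex[OF cadjoint_exists[OF assms]] unfolding cadjoint_def by blast

lemma bounded_clinear_cadjoint:
  fixes T :: "'a::chilbert_space \<Rightarrow> 'a"
  assumes T: "bounded_clinear T"
  shows "bounded_clinear (cadjoint T)"
proof -
  let ?S = "cadjoint T"
  obtain K where K: "K > 0" "\<And>x. norm (T x) \<le> norm x * K"
    using T bounded_clinear_pos_bound by blast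
  have add: "?S (x + y) = ?S x + ?S y" for x y
    by (rule cinner_right_ext) (simp add: cinner_cadjoint[OF T, symmetric] cinner_add_right)
  have scale: "?S (c *\<^sub>C x) = c *\<^sub>C ?S x" for c x
    by (rule cinner_right_ext) (simp add: cinner_cadjoint[OF T, symmetric] cinner_scaleC_right)
  have "norm (?S y) \<le> norm y * K" for y
  proof -
    have "(norm (?S y))\<^sup>2 = Re (cinner (T (?S y)) y)"
      using cinner_cadjoint[OF T, of "?S y" y] cinner_commute[of y]
      by (metis power2_norm_eq_cinner cnj.sel(1))
    also have "\<dots> \<le> norm (T (?S y)) * norm y"
      using complex_Re_le_cmod order_trans cinner_Cauchy_Schwarz by blast
    also have "\<dots> \<le> (norm (?S y) * K) * norm y"
      by (rule mult_right_mono[OF K(2) norm_ge_zero])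
    finally have "(norm (?S y))\<^sup>2 \<le> norm (?S y) * (norm y * K)"
      by (simp add: mult_ac)
    then show ?thesis
      by (cases "norm (?S y) = 0") (simp_all add: power2_eq_square less_imp_le[OF K(1)])
  qed
  then show ?thesis unfolding bounded_clinear_def clinear_def using add scale by blast
qed

section \<open>The closed graph theorem\<close>

text \<open>Baire: some \<open>closure {x. \<parallel>C x\<parallel> \<le> n}\<close> contains a ball, and differences of its points
  approximate every vector near \<open>0\<close>.\<close>
lemma linear_approximation_near_zero:
  fixes C :: "'a::banach \<Rightarrow> 'b::real_normed_vector"
  assumes "linear C"
  obtains r L where "r > 0" "L \<ge> 0"
    "\<And>z \<epsilon>. norm z < r \<Longrightarrow> \<epsilon> > 0 \<Longrightarrow> \<exists>a. norm (C a) \<le> L \<and> norm (z - a) < \<epsilon>"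
proof -
  define S where "S = (\<lambda>n::nat. {x. norm (C x) \<le> real n})"
  define F where "F = (\<lambda>n. closure (S n))"
  have "\<exists>n. interior (F n) \<noteq> {}"
  proof (rule ccontr)
    assume "\<not> ?thesis"
    then have "Met_TC.mtopology interior_of \<Union>(range F) = {}"
      by (intro Met_TC.metric_Baire_category_alt) (auto simp: F_def complete_UNIV)
    moreover have "x \<in> F (nat \<lceil>norm (C x)\<rceil>)" for x
      using closure_subset[of "S (nat \<lceil>norm (C x)\<rceil>)"] real_nat_ceiling_ge[of "norm (C x)"]
      unfolding F_def S_def by auto
    then have "\<Union>(range F) = UNIV" by blast
    ultimately show False by simp
  qed
  then obtain n x0 r where r: "r > 0" "ball x0 r \<subseteq> F n"
    using mem_interior by blast
  have "\<exists>a. norm (C a) \<le> 2 * real n \<and> norm (z - a) < \<epsilon>"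
    if "norm z < r" "\<epsilon> > 0" for z \<epsilon>
  proof -
    have "x0 + z \<in> F n" "x0 \<in> F n" using r that by (auto simp: dist_norm)
    moreover have "\<epsilon> / 2 > 0" using \<open>\<epsilon> > 0\<close> by simp
    ultimately obtain p q where p: "norm (C p) \<le> real n" "dist p (x0 + z) < \<epsilon> / 2"
      and q: "norm (C q) \<le> real n" "dist q x0 < \<epsilon> / 2"
      unfolding F_def S_def closure_approachable by blast
    have "norm (C (p - q)) \<le> 2 * real n"
      using norm_triangle_ineq4[of "C p" "C q"] p(1) q(1) by (simp add: linear_diff[OF assms])
    moreover have "norm (z - (p - q)) < \<epsilon>"
    proof -
      have "z - (p - q) = (x0 + z - p) - (x0 - q)" by (simp add: algebra_simps)
      then have "norm (z - (p - q)) \<le> norm (x0 + z - p) + norm (x0 - q)"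
        by (metis norm_triangle_ineq4)
      also have "\<dots> < \<epsilon>" using p(2) q(2) by (simp add: dist_norm norm_minus_commute)
      finally show ?thesis .
    qed
    ultimately show ?thesis by blast
  qed
  then show ?thesis using that[OF r(1), of "2 * real n"] by simp
qed

lemma linear_approximation_scaled:
  fixes C :: "'a::real_normed_vector \<Rightarrow> 'b::real_normed_vector"
  assumes "linear C"
    and approx: "\<And>z \<epsilon>. norm z < r \<Longrightarrow> \<epsilon> > 0 \<Longrightarrow> \<exists>a. norm (C a) \<le> L \<and> norm (z - a) < \<epsilon>"
    and "t > 0" "norm z < r * t" "\<epsilon> > 0"
  shows "\<exists>a. norm (C a) \<le> L * t \<and> norm (z - a) < \<epsilon>"
proof -
  have "norm ((1/t) *\<^sub>R z) < r" using assms(3,4) by (simp add: field_simps)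
  then obtain a where a: "norm (C a) \<le> L" "norm ((1/t) *\<^sub>R z - a) < \<epsilon> / t"
    using approx[of "(1/t) *\<^sub>R z" "\<epsilon> / t"] assms(3,5) by auto
  have "norm (C (t *\<^sub>R a)) \<le> L * t"
    using a(1) \<open>t > 0\<close> by (simp add: linear_scale[OF assms(1)] mult.commute)
  moreover have "norm (z - t *\<^sub>R a) < \<epsilon>"
  proof -
    have "z - t *\<^sub>R a = t *\<^sub>R ((1/t) *\<^sub>R z - a)"
      using \<open>t > 0\<close> by (simp add: algebra_simps)
    then have "norm (z - t *\<^sub>R a) = t * norm ((1/t) *\<^sub>R z - a)"
      using \<open>t > 0\<close> by simp
    also have "\<dots> < \<epsilon>"
      using a(2) \<open>t > 0\<close> by (simp add: field_simps)
    finally show ?thesis .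
  qed
  ultimately show ?thesis by blast
qed

text \<open>Successive approximation at the scales \<open>r/2\<^sup>k\<close> writes \<open>z\<close> as a series whose images
  under \<open>C\<close> are dominated by \<open>L/2\<^sup>k\<close>; closedness of the graph identifies the sum of the images
  with \<open>C z\<close>.\<close>
lemma closed_graph_bounded_on_ball:
  fixes C :: "'a::real_normed_vector \<Rightarrow> 'b::banach"
  assumes "linear C"
    and graph: "\<And>xs x y. xs \<longlonglongrightarrow> x \<Longrightarrow> (\<lambda>n. C (xs n)) \<longlonglongrightarrow> y \<Longrightarrow> y = C x"
    and "L \<ge> 0"
    and approx: "\<And>k y. norm y < r * (1/2)^k \<Longrightarrow>
          \<exists>a. norm (C a) \<le> L * (1/2)^k \<and> norm (y - a) < r * (1/2)^(Suc k)"
    and "norm z < r"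
  shows "norm (C z) \<le> 2 * L"
proof -
  have "\<forall>k y. \<exists>a. norm y < r * (1/2)^k \<longrightarrow>
      norm (C a) \<le> L * (1/2)^k \<and> norm (y - a) < r * (1/2)^(Suc k)"
    using approx by blast
  then obtain g where g: "\<And>k y. norm y < r * (1/2)^k \<Longrightarrow>
      norm (C (g k y)) \<le> L * (1/2)^k \<and> norm (y - g k y) < r * (1/2)^(Suc k)"
    by metis
  define zs where "zs = rec_nat z (\<lambda>k y. y - g k y)"
  have zs0: "zs 0 = z" and zsS: "\<And>k. zs (Suc k) = zs k - g k (zs k)"
    by (simp_all add: zs_def)
  have zs_bound: "norm (zs k) < r * (1/2)^k" for k
    by (induction k) (use \<open>norm z < r\<close> g in \<open>simp_all add: zs0 zsS\<close>)
  define a where "a k = g k (zs k)" for k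
  have Ca: "norm (C (a k)) \<le> L * (1/2)^k" for k
    unfolding a_def using g[OF zs_bound[of k]] by simp
  have partial_sums: "(\<Sum>k<m. C (a k)) = C (z - zs m)" for m
    by (induction m) (simp_all add: zs0 zsS a_def linear_diff[OF assms(1)] linear_0[OF assms(1)])
  have geometric: "summable (\<lambda>k. L * (1/2::real)^k)"
    by (intro summable_mult summable_geometric) simp
  have summable: "summable (\<lambda>k. C (a k))"
    by (rule summable_comparison_test'[OF geometric]) (rule Ca)
  have "zs \<longlonglongrightarrow> 0"
  proof (rule Lim_null_comparison[where g = "\<lambda>k. r * (1/2)^k"])
    show "\<forall>\<^sub>F k in sequentially. norm (zs k) \<le> r * (1/2)^k"
      using zs_bound less_imp_le by (blast intro: always_eventually)
    show "(\<lambda>k. r * (1/2::real)^k) \<longlonglongrightarrow> 0"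
      by (intro tendsto_mult_right_zero LIMSEQ_power_zero) simp
  qed
  then have "(\<lambda>m. z - zs m) \<longlonglongrightarrow> z"
    using tendsto_diff[OF tendsto_const, of zs 0 sequentially z] by simp
  moreover have "(\<lambda>m. C (z - zs m)) \<longlonglongrightarrow> (\<Sum>k. C (a k))"
    using summable_LIMSEQ[OF summable] partial_sums by simp
  ultimately have sum_eq: "(\<Sum>k. C (a k)) = C z" by (rule graph)
  have "norm (\<Sum>k. C (a k)) \<le> (\<Sum>k. L * (1/2::real)^k)"
    by (rule norm_suminf_le[OF Ca geometric])
  also have "\<dots> = 2 * L"
    by (simp add: suminf_mult suminf_geometric summable_geometric)
  finally show ?thesis by (simp add: sum_eq)
qed

theorem closed_graph:
  fixes C :: "'a::banach \<Rightarrow> 'b::banach"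
  assumes "linear C"
    and graph: "\<And>xs x y. xs \<longlonglongrightarrow> x \<Longrightarrow> (\<lambda>n. C (xs n)) \<longlonglongrightarrow> y \<Longrightarrow> y = C x"
  shows "\<exists>K. \<forall>x. norm (C x) \<le> norm x * K"
proof -
  obtain r L where "r > 0" "L \<ge> 0"
    and approx: "\<And>z \<epsilon>. norm z < r \<Longrightarrow> \<epsilon> > 0 \<Longrightarrow> \<exists>a. norm (C a) \<le> L \<and> norm (z - a) < \<epsilon>"
    using linear_approximation_near_zero[OF assms(1)] by blast
  have ball_bound: "norm (C z) \<le> 2 * L" if "norm z < r" for z
  proof (rule closed_graph_bounded_on_ball[OF assms \<open>L \<ge> 0\<close> _ that])
    fix k and y :: 'a
    assume y: "norm y < r * (1/2)^k"
    have "(1/2::real)^k > 0" "r * (1/2)^(Suc k) > 0" using \<open>r > 0\<close> by simp_all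
    then show "\<exists>a. norm (C a) \<le> L * (1/2)^k \<and> norm (y - a) < r * (1/2)^(Suc k)"
      using linear_approximation_scaled[OF assms(1) approx _ y] by blast
  qed
  have "norm (C x) \<le> norm x * (4 * L / r)" for x
  proof (cases "x = 0")
    case True
    then show ?thesis by (simp add: linear_0[OF assms(1)])
  next
    case False
    define t where "t = r / (2 * norm x)"
    have "t > 0" using \<open>r > 0\<close> False by (simp add: t_def)
    have "norm (t *\<^sub>R x) < r" using \<open>r > 0\<close> False by (simp add: t_def)
    then have "norm (C (t *\<^sub>R x)) \<le> 2 * L" by (rule ball_bound)
    then have "t * norm (C x) \<le> 2 * L"
      using \<open>t > 0\<close> by (simp add: linear_scale[OF assms(1)])
    then have "norm (C x) \<le> 2 * L / t"
      using \<open>t > 0\<close> by (simp add: field_simps mult.commute)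
    also have "\<dots> = norm x * (4 * L / r)"
      using \<open>r > 0\<close> False by (simp add: t_def field_simps)
    finally show ?thesis .
  qed
  then show ?thesis by blast
qed

section \<open>Positive operators and the \<open>A\<close>-semi-inner product\<close>

locale positive_operator =
  fixes A :: "'a::chilbert_space \<Rightarrow> 'a"
  assumes positive: "positive_op A"
begin

lemma bounded_clinear_A: "bounded_clinear A"
  using positive by (simp add: positive_op_def)

lemma clinear_A: "clinear A"
  using bounded_clinear_A by (rule bounded_clinear_clinear)

text \<open>Polarization: a sesquilinear form with real quadratic form is hermitian.\<close>
lemma A_selfadjoint: "cinner (A x) y = cinner x (A y)"
proof -
  have real: "Im (cinner (A z) z) = 0" for z
    using positive by (simp add: positive_op_def)
  define a where "a = cinner (A x) y"
  define b where "b = cinner (A y) x"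
  have "cinner (A (x + y)) (x + y) = cinner (A x) x + a + b + cinner (A y) y"
    by (simp add: clinear_add[OF clinear_A] cinner_add_left cinner_add_right a_def b_def)
  then have "Im a + Im b = 0"
    using real[of "x + y"] real[of x] real[of y] by simp
  moreover have "cinner (A (x + \<i> *\<^sub>C y)) (x + \<i> *\<^sub>C y)
      = cinner (A x) x + (- \<i>) * a + \<i> * b + cinner (A y) y"
    by (simp add: clinear_add[OF clinear_A] clinear_scaleC[OF clinear_A] cinner_add_left
        cinner_add_right cinner_scaleC_left cinner_scaleC_right a_def b_def algebra_simps)
  then have "Re b - Re a = 0"
    using real[of "x + \<i> *\<^sub>C y"] real[of x] real[of y] by simp
  ultimately have "a = cnj b" by (simp add: complex_eq_iff)
  then show ?thesis using cinner_commute[of x "A y"] by (simp add: a_def b_def)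
qed

lemma A_inner_add_left: "A_inner A (x + y) z = A_inner A x z + A_inner A y z"
  by (simp add: A_inner_def clinear_add[OF clinear_A] cinner_add_left)

lemma A_inner_scaleC_left: "A_inner A (c *\<^sub>C x) y = c * A_inner A x y"
  by (simp add: A_inner_def clinear_scaleC[OF clinear_A] cinner_scaleC_left)

lemma A_inner_scaleC_right: "A_inner A x (c *\<^sub>C y) = cnj c * A_inner A x y"
  by (simp add: A_inner_def cinner_scaleC_right)

lemma A_inner_diff_left: "A_inner A (x - y) z = A_inner A x z - A_inner A y z"
  using A_inner_add_left[of x "- y" z] A_inner_scaleC_left[of "-1" y z]
  by (simp add: scaleC_minus1_left)

lemma A_inner_scaleC_scaleC: "A_inner A (a *\<^sub>C x) (b *\<^sub>C y) = a * cnj b * A_inner A x y"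
  by (simp add: A_inner_scaleC_left A_inner_scaleC_right)

lemma A_inner_clinear_scaleC:
  assumes "clinear B"
  shows "A_inner A (B (a *\<^sub>C x)) (b *\<^sub>C y) = a * cnj b * A_inner A (B x) y"
  by (simp add: clinear_scaleC[OF assms] A_inner_scaleC_scaleC)

lemma A_inner_commute: "A_inner A x y = cnj (A_inner A y x)"
  by (simp add: A_inner_def A_selfadjoint cinner_commute[of x "A y"])

lemma A_inner_self_nonneg: "0 \<le> Re (A_inner A x x)"
  using positive unfolding positive_op_def A_inner_def by blast

lemma A_norm_nonneg: "0 \<le> A_norm A x"
  using A_inner_self_nonneg by (simp add: A_norm_def)

lemma power2_A_norm: "(A_norm A x)\<^sup>2 = Re (A_inner A x x)"
  using A_inner_self_nonneg by (simp add: A_norm_def)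

lemma A_inner_self: "A_inner A x x = complex_of_real ((A_norm A x)\<^sup>2)"
  using A_inner_commute[of x x] by (simp add: power2_A_norm complex_eq_iff)

lemma A_inner_Cauchy_Schwarz: "cmod (A_inner A x y) \<le> A_norm A x * A_norm A y"
proof -
  have "(cmod (A_inner A x y))\<^sup>2 \<le> (A_norm A x * A_norm A y)\<^sup>2"
    using sesquilinear_form_Cauchy_Schwarz[of "A_inner A", OF A_inner_add_left
        A_inner_scaleC_left A_inner_commute A_inner_self_nonneg]
    by (simp add: power2_A_norm power_mult_distrib)
  then show ?thesis
    using A_norm_nonneg[of x] A_norm_nonneg[of y] by (simp add: power2_le_iff_abs_le)
qed

lemma A_norm_scaleC: "A_norm A (c *\<^sub>C x) = cmod c * A_norm A x"
proof -
  have "A_inner A (c *\<^sub>C x) (c *\<^sub>C x) = (c * cnj c) * A_inner A x x"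
    by (simp add: A_inner_scaleC_left A_inner_scaleC_right mult.assoc)
  also have "\<dots> = complex_of_real ((cmod c)\<^sup>2 * (A_norm A x)\<^sup>2)"
    by (simp add: complex_norm_square[symmetric] A_inner_self)
  finally have "(A_norm A (c *\<^sub>C x))\<^sup>2 = (cmod c * A_norm A x)\<^sup>2"
    by (simp add: power2_A_norm power_mult_distrib)
  then show ?thesis using A_norm_nonneg by (simp add: power2_eq_iff_nonneg)
qed

lemma A_eq_0_if_A_norm_eq_0: "A_norm A x = 0 \<Longrightarrow> A x = 0"
  using A_inner_Cauchy_Schwarz[of x "A x"] by (simp add: A_inner_def cinner_eq_zero_iff)

lemma exists_A_unit_vector:
  assumes "A \<noteq> (\<lambda>_. 0)"
  shows "\<exists>x. A_norm A x = 1"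
proof -
  obtain x where "A x \<noteq> 0" using assms by blast
  then have "A_norm A x > 0" using A_eq_0_if_A_norm_eq_0 A_norm_nonneg[of x] by force
  then have "A_norm A (complex_of_real (1 / A_norm A x) *\<^sub>C x) = 1"
    by (simp add: A_norm_scaleC norm_divide)
  then show ?thesis by blast
qed

lemma A_norm_le_norm:
  obtains C where "C > 0" "\<And>x. A_norm A x \<le> C * norm x"
proof -
  obtain K where K: "K > 0" "\<And>x. norm (A x) \<le> norm x * K"
    using bounded_clinear_A bounded_clinear_pos_bound by blast
  have "A_norm A x \<le> sqrt K * norm x" for x
  proof -
    have "(A_norm A x)\<^sup>2 \<le> cmod (cinner (A x) x)"
      by (simp add: power2_A_norm A_inner_def complex_Re_le_cmod)
    also have "\<dots> \<le> norm (A x) * norm x" by (rule cinner_Cauchy_Schwarz)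
    also have "\<dots> \<le> norm x * K * norm x" using K(2)[of x] by (simp add: mult_right_mono)
    also have "\<dots> = (sqrt K * norm x)\<^sup>2"
      using K(1) by (simp add: power_mult_distrib power2_eq_square)
    finally show ?thesis
      using A_norm_nonneg[of x] K(1) by (simp add: power2_le_iff_abs_le)
  qed
  then show ?thesis using that[of "sqrt K"] K(1) by simp
qed

subsection \<open>Douglas' reduced solution\<close>

lemma csubspace_closure_range_A: "csubspace (closure (range A))"
proof (rule csubspace_closure)
  have "0 \<in> range A" "A x + A y \<in> range A" "c *\<^sub>C A x \<in> range A" for x y c
    using clinear_zero[OF clinear_A] clinear_add[OF clinear_A, of x y]
      clinear_scaleC[OF clinear_A, of c x] by (metis rangeI)+
  then show "csubspace (range A)" unfolding csubspace_def by blast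
qed

text \<open>The kernel of \<open>A\<close> is orthogonal to its range.\<close>
lemma inj_on_A_closure_range: "inj_on A (closure (range A))"
proof (rule inj_onI)
  fix u v
  assume u: "u \<in> closure (range A)" and v: "v \<in> closure (range A)" and "A u = A v"
  have "u + (-1) *\<^sub>C v \<in> closure (range A)"
    using csubspace_closure_range_A u v unfolding csubspace_def by blast
  then have uv: "u - v \<in> closure (range A)" by (simp add: scaleC_minus1_left)
  have "closure (range A) \<subseteq> {w. cinner w (u - v) = 0}"
  proof (rule closure_minimal)
    show "range A \<subseteq> {w. cinner w (u - v) = 0}"
      using \<open>A u = A v\<close> by (auto simp: A_selfadjoint clinear_diff[OF clinear_A])
    show "closed {w. cinner w (u - v) = 0}"
      by (rule closed_Collect_eq) (auto intro: linear_continuous_on bounded_linear_cinner_left)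
  qed
  then have "cinner (u - v) (u - v) = 0" using uv by blast
  then show "u = v" by (simp add: cinner_eq_zero_iff)
qed

lemma range_A_subset_image_closure: "range A \<subseteq> A ` closure (range A)"
proof
  fix z assume "z \<in> range A"
  then obtain w where w: "z = A w" by blast
  obtain m where m: "m \<in> closure (range A)"
    and orth: "\<And>v. v \<in> closure (range A) \<Longrightarrow> cinner (w - m) v = 0"
    using orthogonal_projection_exists[OF closed_closure csubspace_closure_range_A, of w] by blast
  have "cinner (A (w - m)) (A (w - m)) = 0"
    using orth[of "A (A (w - m))"] closure_subset[of "range A"] by (auto simp: A_selfadjoint)
  then have "A m = A w" by (simp add: cinner_eq_zero_iff clinear_diff[OF clinear_A])
  then show "z \<in> A ` closure (range A)" using m w by (metis image_eqI)
qed

theorem reduced_solution_exists: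
  fixes B :: "'a \<Rightarrow> 'a"
  assumes B: "bounded_clinear B" and "range B \<subseteq> range A"
  obtains X where "bounded_clinear X" "\<And>x. A (X x) = B x" "\<And>x. X x \<in> closure (range A)"
proof -
  have "B x \<in> A ` closure (range A)" for x
    using assms(2) range_A_subset_image_closure by (simp add: image_subset_iff) (metis rangeE)
  then have "\<forall>x. \<exists>u. u \<in> closure (range A) \<and> A u = B x"
    by (metis imageE)
  then obtain X where X: "\<And>x. X x \<in> closure (range A)" "\<And>x. A (X x) = B x"
    by metis
  have X_eqI: "X x = u" if "u \<in> closure (range A)" "A u = B x" for x u
    using inj_onD[OF inj_on_A_closure_range, of "X x" u] X that by simp
  have add: "X (x + y) = X x + X y" for x y
    using X csubspace_closure_range_A
    by (intro X_eqI) (simp_all add: csubspace_def clinear_add[OF clinear_A]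
        clinear_add[OF bounded_clinear_clinear[OF B]])
  have scale: "X (c *\<^sub>C x) = c *\<^sub>C X x" for c x
    using X csubspace_closure_range_A
    by (intro X_eqI) (simp_all add: csubspace_def clinear_scaleC[OF clinear_A]
        clinear_scaleC[OF bounded_clinear_clinear[OF B]])
  have "linear X" by (rule linearI) (simp_all add: add scaleR_scaleC scale)
  then have "\<exists>K. \<forall>x. norm (X x) \<le> norm x * K"
  proof (rule closed_graph)
    fix xs x y
    assume xs: "xs \<longlonglongrightarrow> x" and Xxs: "(\<lambda>n. X (xs n)) \<longlonglongrightarrow> y"
    have "y \<in> closure (range A)"
      using X(1) by (intro closed_sequentially[OF closed_closure _ Xxs]) auto
    moreover have "(\<lambda>n. A (X (xs n))) \<longlonglongrightarrow> A y"
      by (rule bounded_linear.tendsto[OF bounded_clinear_imp_bounded_linear[OF bounded_clinear_A] Xxs])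
    moreover have "(\<lambda>n. A (X (xs n))) \<longlonglongrightarrow> B x"
      unfolding X(2) by (rule bounded_linear.tendsto[OF bounded_clinear_imp_bounded_linear[OF B] xs])
    ultimately show "y = X x" using LIMSEQ_unique by (blast intro: X_eqI[symmetric])
  qed
  then have "bounded_clinear X" using add scale by (simp add: bounded_clinear_def clinear_def)
  then show ?thesis using that X by blast
qed

lemma A_selfadjoint_funpow:
  assumes "\<And>u v. A_inner A (P u) v = A_inner A u (P v)"
  shows "A_inner A ((P ^^ n) u) v = A_inner A u ((P ^^ n) v)"
proof (induction n arbitrary: v)
  case (Suc n)
  have "A_inner A ((P ^^ Suc n) u) v = A_inner A ((P ^^ n) u) (P v)" by (simp add: assms)
  also have "\<dots> = A_inner A u ((P ^^ n) (P v))" by (rule Suc.IH)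
  finally show ?case by (simp add: funpow_swap1)
qed simp

lemma A_norm_selfadjoint_iterate:
  assumes selfadjoint: "\<And>u v. A_inner A (P u) v = A_inner A u (P v)" and "A_norm A x = 1"
  shows "(A_norm A (P x)) ^ (2 ^ k) \<le> A_norm A ((P ^^ (2 ^ k)) x)"
proof (induction k)
  case (Suc k)
  have square: "(A_norm A ((P ^^ m) x))\<^sup>2 \<le> A_norm A ((P ^^ (2 * m)) x)" for m
  proof -
    have "(A_norm A ((P ^^ m) x))\<^sup>2 = Re (A_inner A ((P ^^ m) ((P ^^ m) x)) x)"
      by (simp add: power2_A_norm A_selfadjoint_funpow[OF selfadjoint])
    also have "\<dots> \<le> A_norm A ((P ^^ m) ((P ^^ m) x)) * A_norm A x"
      using complex_Re_le_cmod A_inner_Cauchy_Schwarz order_trans by blast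
    finally show ?thesis by (simp add: assms(2) funpow_add mult_2)
  qed
  have "(A_norm A (P x)) ^ (2 ^ Suc k) = ((A_norm A (P x)) ^ (2 ^ k))\<^sup>2"
    by (simp add: power_mult[symmetric] mult.commute)
  also have "\<dots> \<le> (A_norm A ((P ^^ (2 ^ k)) x))\<^sup>2"
    using Suc.IH A_norm_nonneg by (intro power_mono) auto
  also have "\<dots> \<le> A_norm A ((P ^^ (2 ^ Suc k)) x)"
    using square[of "2 ^ k"] by simp
  finally show ?case .
qed simp

text \<open>Power trick: \<open>\<parallel>P x\<parallel>\<^sub>A ^ 2^k \<le> \<parallel>P^(2^k) x\<parallel>\<^sub>A \<le> C K^(2^k) \<parallel>x\<parallel>\<close> for every \<open>k\<close>, which
  forces \<open>\<parallel>P x\<parallel>\<^sub>A \<le> K\<close>.\<close>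
lemma A_norm_selfadjoint_unit_le:
  assumes selfadjoint: "\<And>u v. A_inner A (P u) v = A_inner A u (P v)"
    and K: "K > 0" "\<And>x. norm (P x) \<le> norm x * K" and x: "A_norm A x = 1"
  shows "A_norm A (P x) \<le> K"
proof (rule ccontr)
  assume "\<not> ?thesis"
  then have ratio: "1 < A_norm A (P x) / K" using K(1) by simp
  obtain C where C: "C > 0" "\<And>u. A_norm A u \<le> C * norm u"
    using A_norm_le_norm by blast
  have bound: "(A_norm A (P x) / K) ^ (2 ^ k) \<le> C * norm x" for k
  proof -
    have "(A_norm A (P x)) ^ (2 ^ k) \<le> A_norm A ((P ^^ (2 ^ k)) x)"
      by (rule A_norm_selfadjoint_iterate[OF selfadjoint x])
    also have "\<dots> \<le> C * norm ((P ^^ (2 ^ k)) x)" by (rule C(2))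
    also have "\<dots> \<le> C * (K ^ (2 ^ k) * norm x)"
      by (rule mult_left_mono[OF norm_funpow_le[OF less_imp_le[OF K(1)] K(2)] less_imp_le[OF C(1)]])
    finally show ?thesis using K(1) by (simp add: power_divide divide_le_eq mult_ac)
  qed
  obtain n where "C * norm x < (A_norm A (P x) / K) ^ n"
    using real_arch_pow[OF ratio] by blast
  also have "\<dots> \<le> (A_norm A (P x) / K) ^ (2 ^ n)"
    using ratio less_exp[of n] by (intro power_increasing) auto
  finally show False using bound[of n] by simp
qed

lemma A_norm_selfadjoint_le:
  assumes P: "bounded_clinear P" and selfadjoint: "\<And>u v. A_inner A (P u) v = A_inner A u (P v)"
  obtains K where "K \<ge> 0" "\<And>x. A_norm A (P x) \<le> K * A_norm A x"
proof -
  obtain K where K: "K > 0" "\<And>x. norm (P x) \<le> norm x * K"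
    using P bounded_clinear_pos_bound by blast
  have "A_norm A (P x) \<le> K * A_norm A x" for x
  proof (cases "A_norm A x = 0")
    case True
    have "(A_norm A (P x))\<^sup>2 = Re (A_inner A (P (P x)) x)"
      by (simp add: power2_A_norm selfadjoint)
    also have "\<dots> \<le> A_norm A (P (P x)) * A_norm A x"
      using complex_Re_le_cmod A_inner_Cauchy_Schwarz order_trans by blast
    finally show ?thesis using True by simp
  next
    case False
    then have pos: "A_norm A x > 0" using A_norm_nonneg[of x] by simp
    define x' where "x' = complex_of_real (1 / A_norm A x) *\<^sub>C x"
    have "A_norm A x' = 1" using pos by (simp add: x'_def A_norm_scaleC norm_divide)
    then have "A_norm A (P x') \<le> K" by (rule A_norm_selfadjoint_unit_le[OF selfadjoint K])
    moreover have "A_norm A (P x') = A_norm A (P x) / A_norm A x"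
      using pos by (simp add: x'_def clinear_scaleC[OF bounded_clinear_clinear[OF P]]
          A_norm_scaleC norm_divide)
    ultimately show ?thesis using pos by (simp add: divide_le_eq mult.commute)
  qed
  then show ?thesis using that[of K] K(1) by simp
qed

end

locale BA_operator = positive_operator +
  fixes T :: "'a::chilbert_space \<Rightarrow> 'a"
  assumes T_in_BA: "T \<in> BA A"
begin

lemma bounded_clinear_T: "bounded_clinear T"
  using T_in_BA by (simp add: BA_def)

lemma clinear_T: "clinear T"
  using bounded_clinear_T by (rule bounded_clinear_clinear)

lemma Asharp_spec:
  "bounded_clinear (Asharp A T) \<and> (\<forall>x. A (Asharp A T x) = cadjoint T (A x))
     \<and> range (Asharp A T) \<subseteq> closure (range A)"
proof -
  have "bounded_clinear (\<lambda>x. cadjoint T (A x))"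
    by (rule bounded_clinear_compose[OF bounded_clinear_cadjoint[OF bounded_clinear_T]
          bounded_clinear_A])
  moreover have "range (\<lambda>x. cadjoint T (A x)) \<subseteq> range A"
    using T_in_BA by (simp add: BA_def comp_def)
  ultimately obtain X where X: "bounded_clinear X" "\<And>x. A (X x) = cadjoint T (A x)"
      "\<And>x. X x \<in> closure (range A)"
    using reduced_solution_exists by blast
  have "Asharp A T = X"
    unfolding Asharp_def
  proof (rule the_equality)
    show "bounded_clinear X \<and> (\<forall>x. A (X x) = cadjoint T (A x)) \<and> range X \<subseteq> closure (range A)"
      using X by blast
    fix Y
    assume Y: "bounded_clinear Y \<and> (\<forall>x. A (Y x) = cadjoint T (A x)) \<and> range Y \<subseteq> closure (range A)"
    show "Y = X"
    proof
      fix x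
      show "Y x = X x"
        using inj_onD[OF inj_on_A_closure_range, of "Y x" "X x"] Y X(2,3)
        by (auto simp: image_subset_iff)
    qed
  qed
  then show ?thesis using X by auto
qed

lemma clinear_Asharp: "clinear (Asharp A T)"
  using Asharp_spec bounded_clinear_clinear by blast

lemma A_inner_Asharp: "A_inner A (Asharp A T x) y = A_inner A x (T y)"
proof -
  have "A_inner A (Asharp A T x) y = cinner (cadjoint T (A x)) y"
    using Asharp_spec by (simp add: A_inner_def)
  also have "\<dots> = cnj (cinner y (cadjoint T (A x)))" by (rule cinner_commute)
  also have "\<dots> = cnj (cinner (T y) (A x))" by (simp add: cinner_cadjoint[OF bounded_clinear_T])
  also have "\<dots> = A_inner A x (T y)" by (simp add: A_inner_def cinner_commute[of "A x"])
  finally show ?thesis .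
qed

lemma A_norm_T_le:
  obtains K where "K \<ge> 0" "\<And>x. A_norm A (T x) \<le> K * A_norm A x"
proof -
  have "bounded_clinear (\<lambda>x. Asharp A T (T x))"
    using bounded_clinear_compose Asharp_spec bounded_clinear_T by blast
  moreover have "A_inner A (Asharp A T (T u)) v = A_inner A u (Asharp A T (T v))" for u v
    by (metis A_inner_Asharp A_inner_commute)
  ultimately obtain K where K: "K \<ge> 0" "\<And>x. A_norm A (Asharp A T (T x)) \<le> K * A_norm A x"
    using A_norm_selfadjoint_le by metis
  have "A_norm A (T x) \<le> sqrt K * A_norm A x" for x
  proof -
    have "(A_norm A (T x))\<^sup>2 = Re (A_inner A (Asharp A T (T x)) x)"
      by (simp add: power2_A_norm A_inner_Asharp)
    also have "\<dots> \<le> A_norm A (Asharp A T (T x)) * A_norm A x"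
      using complex_Re_le_cmod A_inner_Cauchy_Schwarz order_trans by blast
    also have "\<dots> \<le> K * A_norm A x * A_norm A x"
      using K(2) A_norm_nonneg by (rule mult_right_mono)
    also have "\<dots> = (sqrt K * A_norm A x)\<^sup>2"
      using K(1) by (simp add: power_mult_distrib power2_eq_square)
    finally show ?thesis
      using A_norm_nonneg[of x] K(1) by (simp add: power2_le_iff_abs_le)
  qed
  then show ?thesis using that[of "sqrt K"] K(1) by simp
qed

lemma A_inner_T_le:
  obtains K where "\<And>u v. cmod (A_inner A (T u) v) \<le> K * A_norm A u * A_norm A v"
    and "\<And>u v. cmod (A_inner A u (T v)) \<le> K * A_norm A u * A_norm A v"
proof -
  obtain K where K: "K \<ge> 0" "\<And>x. A_norm A (T x) \<le> K * A_norm A x"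
    using A_norm_T_le by blast
  have "cmod (A_inner A (T u) v) \<le> K * A_norm A u * A_norm A v" for u v
    using order_trans[OF A_inner_Cauchy_Schwarz mult_right_mono[OF K(2) A_norm_nonneg]] .
  moreover have "cmod (A_inner A u (T v)) \<le> K * A_norm A u * A_norm A v" for u v
    using order_trans[OF A_inner_Cauchy_Schwarz mult_left_mono[OF K(2) A_norm_nonneg]]
    by (simp add: mult_ac)
  ultimately show ?thesis using that by blast
qed

lemma A_inner_ReA: "A_inner A (ReA A T u) v = (A_inner A (T u) v + A_inner A u (T v)) / 2"
  unfolding ReA_def by (simp add: A_inner_scaleC_left A_inner_add_left A_inner_Asharp)

lemma A_inner_ImA: "A_inner A (ImA A T u) v = (A_inner A (T u) v - A_inner A u (T v)) / (2 * \<i>)"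
  unfolding ImA_def by (simp add: A_inner_scaleC_left A_inner_diff_left A_inner_Asharp)

lemma clinear_ReA: "clinear (ReA A T)"
  unfolding clinear_def ReA_def
  by (simp add: clinear_add[OF clinear_T] clinear_add[OF clinear_Asharp] clinear_scaleC[OF clinear_T]
      clinear_scaleC[OF clinear_Asharp] scaleC_add_right scaleC_scaleC mult.commute add_ac)

lemma clinear_ImA: "clinear (ImA A T)"
  unfolding clinear_def ImA_def
  by (simp add: clinear_add[OF clinear_T] clinear_add[OF clinear_Asharp] clinear_scaleC[OF clinear_T]
      clinear_scaleC[OF clinear_Asharp] clinear_diff[OF clinear_T] clinear_diff[OF clinear_Asharp]
      scaleC_add_right scaleC_diff_right scaleC_scaleC mult.commute algebra_simps)

lemma A_inner_ReA_self: "A_inner A (ReA A T x) x = complex_of_real (Re (A_inner A (T x) x))"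
  using A_inner_commute[of x "T x"] by (simp add: A_inner_ReA complex_add_cnj)

lemma A_inner_ImA_self: "A_inner A (ImA A T x) x = complex_of_real (Im (A_inner A (T x) x))"
proof -
  have "A_inner A (ImA A T x) x = (A_inner A (T x) x - cnj (A_inner A (T x) x)) / (2 * \<i>)"
    using A_inner_commute[of x "T x"] by (simp add: A_inner_ImA)
  then show ?thesis by (simp add: complex_diff_cnj mult.commute[of _ \<i>])
qed

end

section \<open>Numerical radii\<close>

definition A_form_bounded :: "('a::chilbert_space \<Rightarrow> 'a) \<Rightarrow> ('a \<Rightarrow> 'a) \<Rightarrow> bool" where
  "A_form_bounded A B \<longleftrightarrow> (\<exists>K. \<forall>u v. cmod (A_inner A (B u) v) \<le> K * A_norm A u * A_norm A v)"

lemma omegaAA_ge: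
  assumes "bdd_above {cmod (AA_inner A (M y) y) | y. AA_norm A y = 1}" and "AA_norm A y = 1"
  shows "cmod (AA_inner A (M y) y) \<le> omegaAA A M"
  unfolding omegaAA_def by (rule cSup_upper) (use assms in blast)+

lemma omegaA_le:
  assumes "\<exists>x. A_norm A x = 1" and "\<And>x. A_norm A x = 1 \<Longrightarrow> cmod (A_inner A (T x) x) \<le> c"
  shows "omegaA A T \<le> c"
  unfolding omegaA_def using assms by (intro cSup_least) auto

context positive_operator
begin

lemma A_form_bounded_zero: "A_form_bounded A (\<lambda>_. 0)"
  unfolding A_form_bounded_def A_inner_def
  by (intro exI[of _ 0]) (simp add: clinear_zero[OF clinear_A])

lemma A_form_bounded_scaleC:
  assumes "A_form_bounded A B"
  shows "A_form_bounded A (\<lambda>x. c *\<^sub>C B x)"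
proof -
  obtain K where K: "\<And>u v. cmod (A_inner A (B u) v) \<le> K * A_norm A u * A_norm A v"
    using assms by (auto simp: A_form_bounded_def)
  have "cmod (A_inner A (c *\<^sub>C B u) v) \<le> (cmod c * K) * A_norm A u * A_norm A v" for u v
    using mult_left_mono[OF K[of u v] norm_ge_zero[of c]]
    by (simp add: A_inner_scaleC_left norm_mult mult_ac)
  then show ?thesis unfolding A_form_bounded_def by blast
qed

lemma A_form_bounded_unit_le:
  assumes "A_form_bounded A B"
  obtains K where "\<And>u v. A_norm A u \<le> 1 \<Longrightarrow> A_norm A v \<le> 1 \<Longrightarrow> cmod (A_inner A (B u) v) \<le> K"
proof -
  obtain K where K: "\<And>u v. cmod (A_inner A (B u) v) \<le> K * A_norm A u * A_norm A v"
    using assms by (auto simp: A_form_bounded_def)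
  have "cmod (A_inner A (B u) v) \<le> max K 0"
    if "A_norm A u \<le> 1" "A_norm A v \<le> 1" for u v
  proof -
    have "K * A_norm A u * A_norm A v \<le> max K 0 * (A_norm A u * A_norm A v)"
      using A_norm_nonneg[of u] A_norm_nonneg[of v] by (simp add: mult.assoc mult_right_mono)
    also have "\<dots> \<le> max K 0"
      using that A_norm_nonneg[of u] A_norm_nonneg[of v]
      by (simp add: mult_le_one mult_left_le)
    finally show ?thesis using K[of u v] by linarith
  qed
  then show ?thesis using that by blast
qed

lemma AA_norm_eq_1_imp:
  assumes "AA_norm A y = 1"
  shows "A_norm A (fst y) \<le> 1" and "A_norm A (snd y) \<le> 1"
proof -
  have "(A_norm A (fst y))\<^sup>2 + (A_norm A (snd y))\<^sup>2 = 1"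
    using assms by (simp add: AA_norm_def AA_inner_def power2_A_norm A_inner_self_nonneg)
  then show "A_norm A (fst y) \<le> 1" "A_norm A (snd y) \<le> 1"
    by (smt (verit) A_norm_nonneg one_power2 power2_le_imp_le zero_le_power2)+
qed

lemma bdd_above_AA_numerical_range_opmat:
  assumes "A_form_bounded A B11" "A_form_bounded A B12" "A_form_bounded A B21" "A_form_bounded A B22"
  shows "bdd_above {cmod (AA_inner A (opmat B11 B12 B21 B22 y) y) | y. AA_norm A y = 1}"
proof -
  obtain K11 where
    K11: "\<And>u v. A_norm A u \<le> 1 \<Longrightarrow> A_norm A v \<le> 1 \<Longrightarrow> cmod (A_inner A (B11 u) v) \<le> K11"
    using A_form_bounded_unit_le[OF assms(1)] by blast
  obtain K12 where
    K12: "\<And>u v. A_norm A u \<le> 1 \<Longrightarrow> A_norm A v \<le> 1 \<Longrightarrow> cmod (A_inner A (B12 u) v) \<le> K12"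
    using A_form_bounded_unit_le[OF assms(2)] by blast
  obtain K21 where
    K21: "\<And>u v. A_norm A u \<le> 1 \<Longrightarrow> A_norm A v \<le> 1 \<Longrightarrow> cmod (A_inner A (B21 u) v) \<le> K21"
    using A_form_bounded_unit_le[OF assms(3)] by blast
  obtain K22 where
    K22: "\<And>u v. A_norm A u \<le> 1 \<Longrightarrow> A_norm A v \<le> 1 \<Longrightarrow> cmod (A_inner A (B22 u) v) \<le> K22"
    using A_form_bounded_unit_le[OF assms(4)] by blast
  have "cmod (AA_inner A (opmat B11 B12 B21 B22 y) y) \<le> K11 + K12 + K21 + K22"
    if y: "AA_norm A y = 1" for y
  proof -
    obtain y1 y2 where y12: "y = (y1, y2)" by fastforce
    have "AA_inner A (opmat B11 B12 B21 B22 y) y = A_inner A (B11 y1) y1 + A_inner A (B12 y2) y1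
        + (A_inner A (B21 y1) y2 + A_inner A (B22 y2) y2)"
      by (simp add: y12 opmat_def AA_inner_def A_inner_add_left)
    moreover have "A_norm A y1 \<le> 1" "A_norm A y2 \<le> 1"
      using AA_norm_eq_1_imp[OF y] by (simp_all add: y12)
    ultimately show ?thesis
      using K11 K12 K21 K22 by (smt (verit) norm_triangle_ineq)
  qed
  then show ?thesis by (intro bdd_aboveI[of _ "K11 + K12 + K21 + K22"]) blast
qed

end

context BA_operator
begin

lemma A_form_bounded_ReA: "A_form_bounded A (ReA A T)"
proof -
  obtain K where K: "\<And>u v. cmod (A_inner A (T u) v) \<le> K * A_norm A u * A_norm A v"
      "\<And>u v. cmod (A_inner A u (T v)) \<le> K * A_norm A u * A_norm A v"
    using A_inner_T_le by blast
  have "cmod (A_inner A (ReA A T u) v) \<le> K * A_norm A u * A_norm A v" for u v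
    using norm_triangle_ineq[of "A_inner A (T u) v" "A_inner A u (T v)"] K[of u v]
    by (simp add: A_inner_ReA norm_divide)
  then show ?thesis unfolding A_form_bounded_def by blast
qed

lemma A_form_bounded_ImA: "A_form_bounded A (ImA A T)"
proof -
  obtain K where K: "\<And>u v. cmod (A_inner A (T u) v) \<le> K * A_norm A u * A_norm A v"
      "\<And>u v. cmod (A_inner A u (T v)) \<le> K * A_norm A u * A_norm A v"
    using A_inner_T_le by blast
  have "cmod (A_inner A (ImA A T u) v) \<le> K * A_norm A u * A_norm A v" for u v
    using norm_triangle_ineq4[of "A_inner A (T u) v" "A_inner A u (T v)"] K[of u v]
    by (simp add: A_inner_ImA norm_divide norm_mult)
  then show ?thesis unfolding A_form_bounded_def by blast
qed

lemma AA_inner_ReA_ImA_column: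
  assumes "A_norm A x = 1"
  obtains y where "AA_norm A y = 1"
    and "AA_inner A (opmat (ReA A T) (\<lambda>_. 0) (ImA A T) (\<lambda>_. 0) y) y = A_inner A (T x) x / 2"
proof -
  define c where "c = complex_of_real (sqrt (1/2))"
  define d where "d = - \<i> * c"
  have cc: "c * cnj c = 1/2"
    by (simp add: c_def of_real_mult[symmetric] del: of_real_mult)
  have dd: "d * cnj d = 1/2" and cd: "c * cnj d = \<i> / 2"
    using cc by (simp_all add: d_def mult_ac)
  have x: "A_inner A x x = 1" using assms A_inner_self[of x] by simp
  define y where "y = (c *\<^sub>C x, d *\<^sub>C x)"
  have unit: "AA_norm A y = 1"
    by (simp add: y_def AA_norm_def AA_inner_def A_inner_scaleC_scaleC x cc dd)
  have "AA_inner A (opmat (ReA A T) (\<lambda>_. 0) (ImA A T) (\<lambda>_. 0) y) y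
      = c * cnj c * A_inner A (ReA A T x) x + c * cnj d * A_inner A (ImA A T x) x"
    by (simp add: y_def opmat_def AA_inner_def A_inner_clinear_scaleC[OF clinear_ReA]
        A_inner_clinear_scaleC[OF clinear_ImA])
  also have "\<dots> = A_inner A (T x) x / 2"
    by (simp add: cc cd A_inner_ReA_self A_inner_ImA_self complex_eq_iff)
  finally show ?thesis using that unit by blast
qed

lemma AA_inner_ReA_ImA_antidiagonal:
  assumes "A_norm A x = 1"
  obtains y where "AA_norm A y = 1"
    and "AA_inner A (opmat (\<lambda>_. 0) (\<lambda>x. (- \<i>) *\<^sub>C ImA A T x) (ReA A T) (\<lambda>_. 0) y) y
      = cnj (A_inner A (T x) x) / 2"
proof -
  define c where "c = complex_of_real (sqrt (1/2))"
  have cc: "c * cnj c = 1/2"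
    by (simp add: c_def of_real_mult[symmetric] del: of_real_mult)
  have x: "A_inner A x x = 1" using assms A_inner_self[of x] by simp
  define y where "y = (c *\<^sub>C x, c *\<^sub>C x)"
  have unit: "AA_norm A y = 1"
    by (simp add: y_def AA_norm_def AA_inner_def A_inner_scaleC_scaleC x cc)
  have "AA_inner A (opmat (\<lambda>_. 0) (\<lambda>x. (- \<i>) *\<^sub>C ImA A T x) (ReA A T) (\<lambda>_. 0) y) y
      = - \<i> * (c * cnj c * A_inner A (ImA A T x) x) + c * cnj c * A_inner A (ReA A T x) x"
    by (simp add: y_def opmat_def AA_inner_def A_inner_scaleC_left
        A_inner_clinear_scaleC[OF clinear_ReA] A_inner_clinear_scaleC[OF clinear_ImA])
  also have "\<dots> = cnj (A_inner A (T x) x) / 2"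
    by (simp add: cc A_inner_ReA_self A_inner_ImA_self complex_eq_iff)
  finally show ?thesis using that unit by blast
qed

lemma A_inner_T_le_omegaAA_column:
  assumes "A_norm A x = 1"
  shows "cmod (A_inner A (T x) x) \<le> 2 * omegaAA A (opmat (ReA A T) (\<lambda>_. 0) (ImA A T) (\<lambda>_. 0))"
proof -
  obtain y where y: "AA_norm A y = 1"
    and at_y: "AA_inner A (opmat (ReA A T) (\<lambda>_. 0) (ImA A T) (\<lambda>_. 0) y) y = A_inner A (T x) x / 2"
    using AA_inner_ReA_ImA_column[OF assms] by blast
  have bdd: "bdd_above
      {cmod (AA_inner A (opmat (ReA A T) (\<lambda>_. 0) (ImA A T) (\<lambda>_. 0) y) y) | y. AA_norm A y = 1}"
    by (intro bdd_above_AA_numerical_range_opmat A_form_bounded_ReA A_form_bounded_ImA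
        A_form_bounded_zero)
  show ?thesis
    using omegaAA_ge[OF bdd y] by (simp add: at_y norm_divide)
qed

lemma A_inner_T_le_omegaAA_antidiagonal:
  assumes "A_norm A x = 1"
  shows "cmod (A_inner A (T x) x)
    \<le> 2 * omegaAA A (opmat (\<lambda>_. 0) (\<lambda>x. (- \<i>) *\<^sub>C ImA A T x) (ReA A T) (\<lambda>_. 0))"
proof -
  obtain y where y: "AA_norm A y = 1"
    and at_y: "AA_inner A (opmat (\<lambda>_. 0) (\<lambda>x. (- \<i>) *\<^sub>C ImA A T x) (ReA A T) (\<lambda>_. 0) y) y
      = cnj (A_inner A (T x) x) / 2"
    using AA_inner_ReA_ImA_antidiagonal[OF assms] by blast
  have bdd: "bdd_above {cmod (AA_inner A
      (opmat (\<lambda>_. 0) (\<lambda>x. (- \<i>) *\<^sub>C ImA A T x) (ReA A T) (\<lambda>_. 0) y) y) | y. AA_norm A y = 1}"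
    by (intro bdd_above_AA_numerical_range_opmat A_form_bounded_ReA A_form_bounded_scaleC
        A_form_bounded_ImA A_form_bounded_zero)
  show ?thesis
    using omegaAA_ge[OF bdd y] by (simp add: at_y norm_divide)
qed

end

theorem theorem2p20:
  fixes A T :: "'a::chilbert_space \<Rightarrow> 'a"
  assumes "positive_op A" and "A \<noteq> (\<lambda>_. 0)" and "T \<in> BA A"
  shows "omegaA A T \<le> 2 * min
           (omegaAA A (opmat (ReA A T) (\<lambda>_. 0) (ImA A T) (\<lambda>_. 0)))
           (omegaAA A (opmat (\<lambda>_. 0) (\<lambda>x. (- \<i>) *\<^sub>C ImA A T x) (ReA A T) (\<lambda>_. 0)))"
proof -
  interpret BA_operator A T
    using assms(1,3) by unfold_locales
  show ?thesis
    by (intro omegaA_le[OF exists_A_unit_vector[OF assms(2)]])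
       (simp add: min_def A_inner_T_le_omegaAA_column A_inner_T_le_omegaAA_antidiagonal)
qed

end
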